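(* Let $n\ge1$, and for $j=1,\dots,n$ let $\hat\phi_j\in\mathbb{R}$, $\tilde\phi_j\ge 0$ and $0\le\underline{\xi}_j\le\overline{\xi}_j$. For $\mathbf{x}\in\mathbb{R}^n$, $\mathbf{x}\succeq\mathbf{0}$, define $$\mathcal{P}_{\mathrm R}(\mathbf{x})=\max_{\substack{\phi_j\in[\hat\phi_j-\tilde\phi_j,\,\hat\phi_j+\tilde\phi_j]\\ \xi_j\in[\underline\xi_j,\,\overline\xi_j]}}\operatorname{tr}\Big\{\Big(\sum_{j=1}^n x_j\xi_j\mathbf{u}(\phi_j)\mathbf{u}(\phi_j)^{\mathsf T}\Big)^{-1}\Big\}$$ (the trace being $+\infty$ when the matrix is singular), $\underline{\mathbf{R}}=\operatorname{diag}\{\underline\xi_1,\dots,\underline\xi_n\}$ and $B(\mathbf{x})=\tfrac14\,\mathcal{P}_{\mathrm R}(\mathbf{x})\cdot\mathbf{1}^{\mathsf T}\underline{\mathbf{R}}\mathbf{x}$. For a positive integer $M$, let $\vartheta_m=(2m+1)\pi/M$ for $m\in\mathcal{M}=\{0,\dots,M-1\}$, let $[\mathbf{h}_m]_j=\max_{|\epsilon|\le2\tilde\phi_j}\cos(2\hat\phi_j-\vartheta_m+\epsilon)$ and $[\mathbf{g}_m]_j=[\mathbf{h}_m]_j/\cos(\pi/M)$, and $$\underline{\mathcal{P}}_M(\mathbf{x})=\max_{m\in\mathcal{M}}\frac{4\cdot\mathbf{1}^{\mathsf T}\underline{\mathbf{R}}\mathbf{x}}{(\mathbf{1}^{\mathsf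 T}\underline{\mathbf{R}}\mathbf{x})^2-(\mathbf{h}_m^{\mathsf T}\underline{\mathbf{R}}\mathbf{x})^2},\qquad \overline{\mathcal{P}}_M(\mathbf{x})=\max_{m\in\mathcal{M}}\frac{4\cdot\mathbf{1}^{\mathsf T}\underline{\mathbf{R}}\mathbf{x}}{(\mathbf{1}^{\mathsf T}\underline{\mathbf{R}}\mathbf{x})^2-(\mathbf{g}_m^{\mathsf T}\underline{\mathbf{R}}\mathbf{x})^2}.$$ Then for any $\mathbf{x}\succeq\mathbf{0}$ with $\mathcal{P}_{\mathrm R}(\mathbf{x})<\infty$ and any $M\ge\pi\sqrt{B(\mathbf{x})}$, $$\overline{\mathcal{P}}_M(\mathbf{x})\le(1+C_M)\,\underline{\mathcal{P}}_M(\mathbf{x}),\qquad C_M=\frac{\sin^2(\pi/M)\,(B(\mathbf{x})-1)}{1-\sin^2(\pi/M)\,B(\mathbf{x})}.$$ Moreover, $C_M$ is monotonically decreasing in $M$ and $\lim_{M\to\infty}C_M/M^{-2}=\pi^2(B(\mathbf{x})-1)$.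
   Context: $\mathbf{u}(\phi)=[\cos\phi\ \ \sin\phi]^{\mathsf T}$; $\mathbf{1}$ is the all-ones vector; $\mathbf{x}\succeq\mathbf{0}$ means entrywise nonnegative. This models one agent (with one uncertainty cell) in a wireless localization network with $n$ anchors: angles $\phi_j$ known to lie in $[\hat\phi_j-\tilde\phi_j,\hat\phi_j+\tilde\phi_j]$, equivalent ranging coefficients $\xi_j$ known to lie in $[\underline\xi_j,\overline\xi_j]$, and $\mathbf{x}$ the anchor transmit power vector. *)

theory Defs
  imports "HOL-Analysis.Analysis"
begin

text \<open>Anchors are indexed by j < n (nat indices 0..n-1). Vectors in R^n are
  functions nat => real, only the values at j < n matter.\<close>

definition uvec :: "real \<Rightarrow> real^2" where
  "uvec \<phi> = vector [cos \<phi>, sin \<phi>]"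

definition outer :: "real^2 \<Rightarrow> real^2^2" where
  "outer v = (\<chi> i k. v$i * v$k)"

definition FIM :: "nat \<Rightarrow> (nat \<Rightarrow> real) \<Rightarrow> (nat \<Rightarrow> real) \<Rightarrow> (nat \<Rightarrow> real) \<Rightarrow> real^2^2" where
  "FIM n x \<xi> \<phi> = (\<Sum>j<n. (x j * \<xi> j) *\<^sub>R outer (uvec (\<phi> j)))"

definition trinv :: "real^2^2 \<Rightarrow> ereal" where
  "trinv A = (if invertible A then ereal (trace (matrix_inv A)) else \<infinity>)"

definition PR :: "nat \<Rightarrow> (nat \<Rightarrow> real) \<Rightarrow> (nat \<Rightarrow> real) \<Rightarrow> (nat \<Rightarrow> real) \<Rightarrow> (nat \<Rightarrow> real)
    \<Rightarrow> (nat \<Rightarrow> real) \<Rightarrow> ereal" where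
  "PR n phat ptil xilo xihi x =
     (SUP p \<in> {(\<phi>, \<xi>). \<forall>j<n. \<phi> j \<in> {phat j - ptil j .. phat j + ptil j}
                              \<and> \<xi> j \<in> {xilo j .. xihi j}}.
        trinv (FIM n x (snd p) (fst p)))"

definition oneRx :: "nat \<Rightarrow> (nat \<Rightarrow> real) \<Rightarrow> (nat \<Rightarrow> real) \<Rightarrow> real" where
  "oneRx n xilo x = (\<Sum>j<n. xilo j * x j)"

definition wRx :: "nat \<Rightarrow> (nat \<Rightarrow> real) \<Rightarrow> (nat \<Rightarrow> real) \<Rightarrow> (nat \<Rightarrow> real) \<Rightarrow> real" where
  "wRx n v xilo x = (\<Sum>j<n. v j * xilo j * x j)"

definition Bfun :: "nat \<Rightarrow> (nat \<Rightarrow> real) \<Rightarrow> (nat \<Rightarrow> real) \<Rightarrow> (nat \<Rightarrow> real) \<Rightarrow> (nat \<Rightarrow> real)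
    \<Rightarrow> (nat \<Rightarrow> real) \<Rightarrow> real" where
  "Bfun n phat ptil xilo xihi x =
     (1/4) * real_of_ereal (PR n phat ptil xilo xihi x) * oneRx n xilo x"

definition theta :: "nat \<Rightarrow> nat \<Rightarrow> real" where
  "theta M m = (2 * real m + 1) * pi / real M"

text \<open>[h_m]_j = max_{|eps| <= 2 ptil_j} cos(2 phat_j - theta_m + eps) (a max over a compact set).\<close>
definition hvec :: "(nat \<Rightarrow> real) \<Rightarrow> (nat \<Rightarrow> real) \<Rightarrow> nat \<Rightarrow> nat \<Rightarrow> nat \<Rightarrow> real" where
  "hvec phat ptil M m j =
     Sup ((\<lambda>e. cos (2 * phat j - theta M m + e)) ` {e. \<bar>e\<bar> \<le> 2 * ptil j})"

definition gvec :: "(nat \<Rightarrow> real) \<Rightarrow> (nat \<Rightarrow> real) \<Rightarrow> nat \<Rightarrow> nat \<Rightarrow> nat \<Rightarrow> real" where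
  "gvec phat ptil M m j = hvec phat ptil M m j / cos (pi / real M)"

definition PlowM :: "nat \<Rightarrow> (nat \<Rightarrow> real) \<Rightarrow> (nat \<Rightarrow> real) \<Rightarrow> (nat \<Rightarrow> real) \<Rightarrow> (nat \<Rightarrow> real)
    \<Rightarrow> nat \<Rightarrow> real" where
  "PlowM n phat ptil xilo x M =
     Max ((\<lambda>m. 4 * oneRx n xilo x /
                 ((oneRx n xilo x)\<^sup>2 - (wRx n (hvec phat ptil M m) xilo x)\<^sup>2)) ` {0..<M})"

definition PupM :: "nat \<Rightarrow> (nat \<Rightarrow> real) \<Rightarrow> (nat \<Rightarrow> real) \<Rightarrow> (nat \<Rightarrow> real) \<Rightarrow> (nat \<Rightarrow> real)
    \<Rightarrow> nat \<Rightarrow> real" where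
  "PupM n phat ptil xilo x M =
     Max ((\<lambda>m. 4 * oneRx n xilo x /
                 ((oneRx n xilo x)\<^sup>2 - (wRx n (gvec phat ptil M m) xilo x)\<^sup>2)) ` {0..<M})"

definition CM :: "real \<Rightarrow> nat \<Rightarrow> real" where
  "CM B M = (sin (pi / real M))\<^sup>2 * (B - 1) / (1 - (sin (pi / real M))\<^sup>2 * B)"

end

theory Submission
  imports Defs "HOL-Real_Asymp.Real_Asymp"
begin

text \<open>With weights \<open>w j = x j * \<xi> j\<close>, the information matrix \<open>F\<close> has trace \<open>S = (\<Sum>j. w j)\<close>
  and \<open>4 det F = S\<^sup>2 - |z|\<^sup>2\<close> for the phasor \<open>z = (\<Sum>j. w j * cis (2 * \<phi> j))\<close>, so
  \<open>tr F\<inverse> = 4 S / (S\<^sup>2 - |z|\<^sup>2)\<close>. Taking the lower ranging coefficients in the worst case, finiteness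
  of \<open>P\<^sub>R\<close> yields \<open>S\<^sup>2 \<le> B (S\<^sup>2 - |z \<phi>|\<^sup>2)\<close> for every admissible \<open>\<phi>\<close>, hence \<open>B \<ge> 1\<close>. The maximising
  perturbations \<open>\<epsilon> j\<close> in \<open>h\<^sub>m\<close> define the admissible angles \<open>\<phi> j = phat j + \<epsilon> j / 2\<close>, for which
  \<open>h\<^sub>m\<^sup>T R x = Re (cis (-\<theta>\<^sub>m) * z \<phi>)\<close>; so the same bound holds with \<open>h\<^sub>m\<^sup>T R x\<close> in place of
  \<open>|z|\<close>. Replacing \<open>h\<^sub>m\<close> by \<open>g\<^sub>m = h\<^sub>m / cos (\<pi>/M)\<close> then enlarges each term of the maximum by
  at most \<open>1 + C\<^sub>M\<close>, provided \<open>sin\<^sup>2 (\<pi>/M) B < 1\<close>, which follows from \<open>M \<ge> \<pi> \<surd>B\<close> and \<open>sin t < t\<close>.\<close>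

lemma matrix_inv_eqI:
  fixes A B :: "'a::field^'n^'n"
  assumes AB: "A ** B = mat 1"
  shows "matrix_inv A = B"
proof -
  have "A ** B = mat 1 \<and> B ** A = mat 1" using AB matrix_left_right_inverse by blast
  then have "A ** matrix_inv A = mat 1 \<and> matrix_inv A ** A = mat 1"
    unfolding matrix_inv_def by (rule someI)
  then have inv: "matrix_inv A ** A = mat 1" by blast
  have "matrix_inv A = matrix_inv A ** (A ** B)" by (simp add: AB)
  also have "\<dots> = (matrix_inv A ** A) ** B" by (rule matrix_mul_assoc)
  also have "\<dots> = B" by (simp add: inv)
  finally show ?thesis .
qed

lemma trace_matrix_inv_2:
  fixes A :: "'a::field^2^2"
  assumes "det A \<noteq> 0"
  shows "trace (matrix_inv A) = trace A / det A"
proof -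
  define C :: "'a^2^2" where
    "C = (\<chi> i j. if i = 1 \<and> j = 1 then A$2$2 / det A else if i = 1 \<and> j = 2 then - A$1$2 / det A
                  else if i = 2 \<and> j = 1 then - A$2$1 / det A else A$1$1 / det A)"
  have "A ** C = mat 1"
    using assms unfolding C_def matrix_matrix_mult_def mat_def
    by (simp add: vec_eq_iff forall_2 sum_2 field_simps) (simp add: det_2 algebra_simps)
  then have "matrix_inv A = C" by (rule matrix_inv_eqI)
  then show ?thesis by (simp add: C_def trace_def sum_2 add_divide_distrib)
qed

lemma trinv_2x2:
  fixes A :: "real^2^2"
  shows "trinv A = (if det A = 0 then \<infinity> else ereal (trace A / det A))"
  by (simp add: trinv_def invertible_det_nz trace_matrix_inv_2)

definition phasor :: "nat \<Rightarrow> (nat \<Rightarrow> real) \<Rightarrow> (nat \<Rightarrow> real) \<Rightarrow> complex" where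
  "phasor n w \<phi> = (\<Sum>j<n. complex_of_real (w j) * cis (2 * \<phi> j))"

lemma norm_phasor_le:
  assumes "\<forall>j<n. 0 \<le> w j"
  shows "cmod (phasor n w \<phi>) \<le> (\<Sum>j<n. w j)"
proof -
  have "cmod (phasor n w \<phi>) \<le> (\<Sum>j<n. cmod (complex_of_real (w j) * cis (2 * \<phi> j)))"
    unfolding phasor_def by (rule norm_sum)
  also have "\<dots> = (\<Sum>j<n. w j)"
    using assms by (intro sum.cong) (auto simp: norm_mult)
  finally show ?thesis .
qed

lemma FIM_nth:
  "FIM n x \<xi> \<phi> $ i $ k = (\<Sum>j<n. x j * \<xi> j * uvec (\<phi> j) $ i * uvec (\<phi> j) $ k)"
  unfolding FIM_def outer_def by (simp add: mult.assoc)

lemma trace_FIM: "trace (FIM n x \<xi> \<phi>) = (\<Sum>j<n. x j * \<xi> j)"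
  unfolding trace_def sum_2 FIM_nth uvec_def sum.distrib[symmetric]
  by (simp add: distrib_left[symmetric] mult.assoc power2_eq_square[symmetric])

lemma det_FIM:
  "4 * det (FIM n x \<xi> \<phi>) = (\<Sum>j<n. x j * \<xi> j)\<^sup>2 - (cmod (phasor n (\<lambda>j. x j * \<xi> j) \<phi>))\<^sup>2"
proof -
  let ?A = "FIM n x \<xi> \<phi>" and ?z = "phasor n (\<lambda>j. x j * \<xi> j) \<phi>"
  have re: "Re ?z = ?A$1$1 - ?A$2$2"
    unfolding FIM_nth uvec_def phasor_def Re_sum sum_subtractf[symmetric]
    by (intro sum.cong refl) (simp add: cos_double; simp add: algebra_simps power2_eq_square)
  have im: "Im ?z = 2 * ?A$1$2"
    unfolding FIM_nth uvec_def phasor_def Im_sum sum_distrib_left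
    by (intro sum.cong refl) (simp add: sin_double; simp add: algebra_simps)
  have sym: "?A$2$1 = ?A$1$2" unfolding FIM_nth by (simp add: algebra_simps)
  have "4 * det ?A = (trace ?A)\<^sup>2 - (?A$1$1 - ?A$2$2)\<^sup>2 - (2 * ?A$1$2)\<^sup>2"
    unfolding det_2 trace_def sum_2 sym by (simp add: algebra_simps power2_eq_square)
  then show ?thesis unfolding trace_FIM cmod_power2 re im by simp
qed

lemma trinv_FIM:
  "trinv (FIM n x \<xi> \<phi>) =
     (let S = \<Sum>j<n. x j * \<xi> j; r = cmod (phasor n (\<lambda>j. x j * \<xi> j) \<phi>)
      in if r\<^sup>2 = S\<^sup>2 then \<infinity> else ereal (4 * S / (S\<^sup>2 - r\<^sup>2)))"
proof -
  have "det (FIM n x \<xi> \<phi>) = ((\<Sum>j<n. x j * \<xi> j)\<^sup>2 - (cmod (phasor n (\<lambda>j. x j * \<xi> j) \<phi>))\<^sup>2) / 4"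
    using det_FIM[of n x \<xi> \<phi>] by simp
  then show ?thesis by (simp only: trinv_2x2 trace_FIM Let_def) simp
qed

definition angle_box :: "nat \<Rightarrow> (nat \<Rightarrow> real) \<Rightarrow> (nat \<Rightarrow> real) \<Rightarrow> (nat \<Rightarrow> real) set" where
  "angle_box n phat ptil = {\<phi>. \<forall>j<n. \<phi> j \<in> {phat j - ptil j .. phat j + ptil j}}"

lemma trinv_FIM_le_PR:
  assumes "\<phi> \<in> angle_box n phat ptil" and "\<forall>j<n. xilo j \<le> xihi j"
  shows "trinv (FIM n x xilo \<phi>) \<le> PR n phat ptil xilo xihi x"
  unfolding PR_def
  by (rule SUP_upper2[of "(\<phi>, xilo)"]) (use assms in \<open>auto simp: angle_box_def\<close>)

lemma phasor_bound_of_PR: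
  assumes xi: "\<forall>j<n. 0 \<le> xilo j \<and> xilo j \<le> xihi j" and x: "\<forall>j<n. 0 \<le> x j"
    and PR: "PR n phat ptil xilo xihi x < \<infinity>" and \<phi>: "\<phi> \<in> angle_box n phat ptil"
  defines "S \<equiv> oneRx n xilo x" and "r \<equiv> cmod (phasor n (\<lambda>j. x j * xilo j) \<phi>)"
  shows "r < S" and "S\<^sup>2 \<le> Bfun n phat ptil xilo xihi x * (S\<^sup>2 - r\<^sup>2)"
proof -
  have S: "(\<Sum>j<n. x j * xilo j) = S" unfolding S_def oneRx_def by (simp add: mult.commute)
  have rS: "r \<le> S" unfolding r_def S[symmetric] using xi x by (intro norm_phasor_le) simp
  have r0: "0 \<le> r" unfolding r_def by simp
  have le: "trinv (FIM n x xilo \<phi>) \<le> PR n phat ptil xilo xihi x"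
    using \<phi> xi by (intro trinv_FIM_le_PR) auto
  obtain p where p: "PR n phat ptil xilo xihi x = ereal p"
    using PR le by (cases "PR n phat ptil xilo xihi x") (auto simp: trinv_def split: if_splits)
  have ne: "r\<^sup>2 \<noteq> S\<^sup>2" and tr: "4 * S / (S\<^sup>2 - r\<^sup>2) \<le> p"
    using le unfolding p trinv_FIM Let_def S r_def[symmetric] by (auto split: if_splits)
  show "r < S" using ne rS r0 by (cases "r = S") auto
  then have D: "0 < S\<^sup>2 - r\<^sup>2" using r0 by (simp add: power_strict_mono)
  have "4 * S \<le> p * (S\<^sup>2 - r\<^sup>2)" using tr D by (simp add: pos_divide_le_eq)
  then have "S * (4 * S) \<le> S * (p * (S\<^sup>2 - r\<^sup>2))" using rS r0 by (intro mult_left_mono) auto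
  then show "S\<^sup>2 \<le> Bfun n phat ptil xilo xihi x * (S\<^sup>2 - r\<^sup>2)"
    unfolding Bfun_def p S_def by (simp add: power2_eq_square algebra_simps)
qed

lemma Bfun_ge_1:
  assumes "\<forall>j<n. 0 \<le> ptil j" and "\<forall>j<n. 0 \<le> xilo j \<and> xilo j \<le> xihi j"
    and "\<forall>j<n. 0 \<le> x j" and "PR n phat ptil xilo xihi x < \<infinity>"
  shows "1 \<le> Bfun n phat ptil xilo xihi x"
proof -
  have "phat \<in> angle_box n phat ptil" using assms(1) by (auto simp: angle_box_def)
  note bound = phasor_bound_of_PR[OF assms(2-4) this]
  let ?S = "oneRx n xilo x" and ?r = "cmod (phasor n (\<lambda>j. x j * xilo j) phat)"
  have "0 < ?S\<^sup>2 - ?r\<^sup>2" using bound(1) by (simp add: power_strict_mono)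
  moreover have "?S\<^sup>2 - ?r\<^sup>2 \<le> ?S\<^sup>2" by simp
  ultimately have "?S\<^sup>2 - ?r\<^sup>2 \<le> Bfun n phat ptil xilo xihi x * (?S\<^sup>2 - ?r\<^sup>2)"
    using bound(2) by linarith
  then show ?thesis using \<open>0 < ?S\<^sup>2 - ?r\<^sup>2\<close> by (simp add: mult_le_cancel_right1)
qed

lemma hvec_attained:
  assumes "0 \<le> ptil j"
  obtains e where "\<bar>e\<bar> \<le> 2 * ptil j" and "hvec phat ptil M m j = cos (2 * phat j - theta M m + e)"
proof -
  let ?f = "\<lambda>e. cos (2 * phat j - theta M m + e)"
  have box: "{e. \<bar>e\<bar> \<le> 2 * ptil j} = {-2 * ptil j .. 2 * ptil j}" by auto
  have "\<exists>e\<in>{-2 * ptil j .. 2 * ptil j}. \<forall>y\<in>{-2 * ptil j .. 2 * ptil j}. ?f y \<le> ?f e"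
    using assms by (intro continuous_attains_sup) (auto intro!: continuous_intros)
  then obtain e where e: "e \<in> {-2 * ptil j .. 2 * ptil j}"
    and max: "\<forall>y\<in>{-2 * ptil j .. 2 * ptil j}. ?f y \<le> ?f e"
    by blast
  have "hvec phat ptil M m j = ?f e"
    unfolding hvec_def box using e max by (intro cSup_eq_maximum) auto
  with e show thesis by (intro that) auto
qed

lemma wRx_hvec_eq_Re_phasor:
  assumes "\<forall>j<n. 0 \<le> ptil j"
  shows "\<exists>\<phi>\<in>angle_box n phat ptil.
           wRx n (hvec phat ptil M m) xilo x = Re (cis (- theta M m) * phasor n (\<lambda>j. x j * xilo j) \<phi>)"
proof -
  have "\<forall>j\<in>{..<n}. \<exists>e. \<bar>e\<bar> \<le> 2 * ptil j \<and> hvec phat ptil M m j = cos (2 * phat j - theta M m + e)"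
    using hvec_attained assms by (metis lessThan_iff)
  then obtain e where e: "\<And>j. j < n \<Longrightarrow>
      \<bar>e j\<bar> \<le> 2 * ptil j \<and> hvec phat ptil M m j = cos (2 * phat j - theta M m + e j)"
    using bchoice by (metis lessThan_iff)
  define \<phi> where "\<phi> j = phat j + e j / 2" for j
  have "\<phi> \<in> angle_box n phat ptil" unfolding angle_box_def \<phi>_def using e by force
  moreover have "wRx n (hvec phat ptil M m) xilo x = Re (cis (- theta M m) * phasor n (\<lambda>j. x j * xilo j) \<phi>)"
    unfolding wRx_def phasor_def sum_distrib_left Re_sum
  proof (intro sum.cong refl)
    fix j assume "j \<in> {..<n}"
    then have "hvec phat ptil M m j = cos (2 * \<phi> j - theta M m)"
      using e unfolding \<phi>_def by (simp add: algebra_simps)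
    moreover have "Re (cis (- theta M m) * (complex_of_real (x j * xilo j) * cis (2 * \<phi> j)))
        = x j * xilo j * cos (2 * \<phi> j - theta M m)"
      by (simp add: cis_mult[symmetric] mult.left_commute cos_diff) (simp add: algebra_simps)
    ultimately show "hvec phat ptil M m j * xilo j * x j
        = Re (cis (- theta M m) * (complex_of_real (x j * xilo j) * cis (2 * \<phi> j)))"
      by simp
  qed
  ultimately show ?thesis by blast
qed

lemma wRx_hvec_bound:
  fixes M m :: nat
  assumes "\<forall>j<n. 0 \<le> ptil j" and "\<forall>j<n. 0 \<le> xilo j \<and> xilo j \<le> xihi j"
    and "\<forall>j<n. 0 \<le> x j" and "PR n phat ptil xilo xihi x < \<infinity>"
  defines "S \<equiv> oneRx n xilo x" and "h \<equiv> wRx n (hvec phat ptil M m) xilo x"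
  shows "h\<^sup>2 < S\<^sup>2 \<and> S\<^sup>2 \<le> Bfun n phat ptil xilo xihi x * (S\<^sup>2 - h\<^sup>2)"
proof -
  obtain \<phi> where \<phi>: "\<phi> \<in> angle_box n phat ptil"
    and h: "h = Re (cis (- theta M m) * phasor n (\<lambda>j. x j * xilo j) \<phi>)"
    using wRx_hvec_eq_Re_phasor[OF assms(1)] unfolding h_def by blast
  let ?r = "cmod (phasor n (\<lambda>j. x j * xilo j) \<phi>)"
  note bound = phasor_bound_of_PR[OF assms(2-4) \<phi>, folded S_def]
  have "\<bar>h\<bar> \<le> ?r"
    using abs_Re_le_cmod[of "cis (- theta M m) * phasor n (\<lambda>j. x j * xilo j) \<phi>"]
    unfolding h by (simp add: norm_mult)
  then have hr: "h\<^sup>2 \<le> ?r\<^sup>2" using power_mono[of "\<bar>h\<bar>" ?r 2] by simp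
  have "?r\<^sup>2 < S\<^sup>2" using bound(1) by (simp add: power_strict_mono)
  moreover have "0 \<le> Bfun n phat ptil xilo xihi x"
    using Bfun_ge_1[OF assms(1-4)] by simp
  then have "Bfun n phat ptil xilo xihi x * (S\<^sup>2 - ?r\<^sup>2) \<le> Bfun n phat ptil xilo xihi x * (S\<^sup>2 - h\<^sup>2)"
    using hr by (intro mult_left_mono) auto
  ultimately show ?thesis using bound(2) hr by linarith
qed

lemma sin_less_self:
  fixes x :: real
  assumes "0 < x"
  shows "sin x < x"
proof (cases "x < 2")
  case True
  have "0 < sin (x/2)" using assms True pi_gt3 by (intro sin_gt_zero) auto
  moreover have "cos (x/2) < 1" using assms True pi_gt3 cos_monotone_0_pi[of 0 "x/2"] by auto
  ultimately have "sin x < 2 * sin (x/2)" using sin_double[of "x/2"] by simp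
  also have "\<dots> \<le> x" using sin_x_le_x[of "x/2"] assms by simp
  finally show ?thesis .
next
  case False
  then show ?thesis using sin_le_one[of x] by linarith
qed

lemma pi_le_of_pi_sqrt_le:
  assumes "1 \<le> B" and "pi * sqrt B \<le> M"
  shows "pi \<le> M"
proof -
  have "pi * 1 \<le> pi * sqrt B" using assms(1) by (intro mult_left_mono) auto
  with assms(2) show ?thesis by linarith
qed

lemma sin_pi_div_sq_mul_less_1:
  fixes B :: real
  assumes B: "1 \<le> B" and M: "pi * sqrt B \<le> real M"
  shows "(sin (pi / real M))\<^sup>2 * B < 1"
proof -
  have piM: "pi \<le> real M" using pi_le_of_pi_sqrt_le[OF B M] .
  then have M0: "0 < real M" using pi_gt_zero by linarith
  have s0: "0 \<le> sin (pi / real M)" using M0 piM by (intro sin_ge_zero) (auto simp: field_simps)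
  have "sin (pi / real M) < pi / real M" using M0 by (intro sin_less_self) simp
  then have "(sin (pi / real M))\<^sup>2 * B < (pi / real M)\<^sup>2 * B"
    using s0 B by (intro mult_strict_right_mono power_strict_mono) auto
  also have "\<dots> = (pi * sqrt B)\<^sup>2 / (real M)\<^sup>2"
    using B by (simp add: power_divide power_mult_distrib)
  also have "\<dots> \<le> 1" using M M0 B by (simp add: power_mono)
  finally show ?thesis .
qed

lemma cos_pi_div_pos:
  assumes "pi \<le> real M"
  shows "0 < cos (pi / real M)"
proof -
  have "2 < real M" using assms pi_gt3 by linarith
  then have "pi / real M < pi / 2" using pi_gt_zero by (intro divide_strict_left_mono) auto
  moreover have "0 < pi / real M" using \<open>2 < real M\<close> by simp
  ultimately show ?thesis by (intro cos_gt_zero_pi) auto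
qed

lemma gap_quotient_div_le:
  fixes S B s c h :: real
  assumes S: "0 \<le> S" and hS: "h\<^sup>2 < S\<^sup>2" and hB: "S\<^sup>2 \<le> B * (S\<^sup>2 - h\<^sup>2)"
    and s: "0 \<le> s" "s * B < 1" and c: "0 < c" "c\<^sup>2 = 1 - s"
  shows "4 * S / (S\<^sup>2 - (h / c)\<^sup>2) \<le> (1 + s * (B - 1) / (1 - s * B)) * (4 * S / (S\<^sup>2 - h\<^sup>2))"
proof -
  have s1: "0 < 1 - s" using c by (metis zero_less_power)
  have "s * S\<^sup>2 \<le> s * B * (S\<^sup>2 - h\<^sup>2)" using hB s by (metis mult.assoc mult_left_mono)
  then have key: "(1 - s * B) * (S\<^sup>2 - h\<^sup>2) \<le> (1 - s) * S\<^sup>2 - h\<^sup>2" by (simp add: algebra_simps)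
  have pos: "0 < (1 - s * B) * (S\<^sup>2 - h\<^sup>2)" using s hS by simp
  have "S\<^sup>2 - (h / c)\<^sup>2 = ((1 - s) * S\<^sup>2 - h\<^sup>2) / (1 - s)"
    unfolding power_divide c(2) using s1 by (simp add: field_simps)
  then have "4 * S / (S\<^sup>2 - (h / c)\<^sup>2) = 4 * S * (1 - s) / ((1 - s) * S\<^sup>2 - h\<^sup>2)" by simp
  also have "\<dots> \<le> 4 * S * (1 - s) / ((1 - s * B) * (S\<^sup>2 - h\<^sup>2))"
    using S s1 pos key by (intro divide_left_mono) auto
  also have "\<dots> = (1 + s * (B - 1) / (1 - s * B)) * (4 * S / (S\<^sup>2 - h\<^sup>2))"
    using s by (simp add: field_simps)
  finally show ?thesis .
qed

lemma Max_image_le_mult_Max: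
  fixes f g :: "'a \<Rightarrow> 'b::linordered_semiring"
  assumes "finite A" "A \<noteq> {}" "0 \<le> k" "\<And>a. a \<in> A \<Longrightarrow> f a \<le> k * g a"
  shows "Max (f ` A) \<le> k * Max (g ` A)"
proof -
  have "f a \<le> k * Max (g ` A)" if "a \<in> A" for a
    using assms that by (meson Max_ge finite_imageI image_eqI mult_left_mono order.trans)
  then show ?thesis using assms by (subst Max_le_iff) auto
qed

lemma PupM_le_CM_PlowM:
  fixes B :: real
  assumes "1 \<le> B" and M: "pi * sqrt B \<le> real M" and S: "0 \<le> oneRx n xilo x"
    and gap: "\<And>m. (wRx n (hvec phat ptil M m) xilo x)\<^sup>2 < (oneRx n xilo x)\<^sup>2 \<and>
                   (oneRx n xilo x)\<^sup>2 \<le> B * ((oneRx n xilo x)\<^sup>2 - (wRx n (hvec phat ptil M m) xilo x)\<^sup>2)"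
  shows "PupM n phat ptil xilo x M \<le> (1 + CM B M) * PlowM n phat ptil xilo x M"
proof -
  define s where "s = (sin (pi / real M))\<^sup>2"
  define c where "c = cos (pi / real M)"
  have "pi \<le> real M" using pi_le_of_pi_sqrt_le[OF assms(1) M] .
  then have "0 < real M" using pi_gt_zero by linarith
  then have M0: "0 < M" by simp
  have sB: "s * B < 1" unfolding s_def using sin_pi_div_sq_mul_less_1[OF assms(1) M] .
  have s0: "0 \<le> s" unfolding s_def by simp
  have c0: "0 < c" unfolding c_def using cos_pi_div_pos[OF \<open>pi \<le> real M\<close>] .
  have c2: "c\<^sup>2 = 1 - s" unfolding c_def s_def by (simp add: cos_squared_eq)
  have CM: "CM B M = s * (B - 1) / (1 - s * B)" unfolding CM_def s_def ..
  have CM0: "0 \<le> CM B M" unfolding CM using sB s0 assms(1) by simp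
  have gw: "wRx n (gvec phat ptil M m) xilo x = wRx n (hvec phat ptil M m) xilo x / c" for m
    unfolding wRx_def gvec_def c_def sum_divide_distrib by (intro sum.cong) auto
  have "4 * oneRx n xilo x / ((oneRx n xilo x)\<^sup>2 - (wRx n (gvec phat ptil M m) xilo x)\<^sup>2)
      \<le> (1 + CM B M) * (4 * oneRx n xilo x / ((oneRx n xilo x)\<^sup>2 - (wRx n (hvec phat ptil M m) xilo x)\<^sup>2))"
    for m unfolding gw CM by (rule gap_quotient_div_le[OF S _ _ s0 sB c0 c2]) (use gap[of m] in auto)
  then show ?thesis unfolding PupM_def PlowM_def using M0 CM0 by (intro Max_image_le_mult_Max) auto
qed

lemma CM_form_mono:
  fixes B s1 s2 :: real
  assumes "0 \<le> s2" "s2 \<le> s1" "s1 * B < 1" "1 \<le> B"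
  shows "s2 * (B - 1) / (1 - s2 * B) \<le> s1 * (B - 1) / (1 - s1 * B)"
proof -
  have p1: "0 < 1 - s1 * B" using assms by simp
  have "s2 * B \<le> s1 * B" using assms by (intro mult_right_mono) auto
  then have p2: "0 < 1 - s2 * B" using p1 by linarith
  have "(B - 1) * (s2 - s1) \<le> 0" using assms by (intro mult_nonneg_nonpos) auto
  then have "s2 * (B - 1) * (1 - s1 * B) \<le> s1 * (B - 1) * (1 - s2 * B)" by (simp add: algebra_simps)
  then show ?thesis using p1 p2 by (simp add: divide_simps)
qed

lemma CM_antimono:
  fixes B :: real
  assumes "1 \<le> B" and M1: "pi * sqrt B \<le> real M1" and "M1 \<le> M2"
  shows "CM B M2 \<le> CM B M1"
proof -
  have "pi \<le> real M1" using pi_le_of_pi_sqrt_le[OF assms(1) M1] .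
  then have "0 < real M1" using pi_gt_zero by linarith
  moreover have "real M1 \<le> real M2" using assms(3) by simp
  ultimately have le: "pi / real M2 \<le> pi / real M1" and pos: "0 < pi / real M2"
    by (auto intro: divide_left_mono)
  have "pi / real M1 \<le> pi / 2" using \<open>pi \<le> real M1\<close> pi_gt3 by (intro divide_left_mono) auto
  then have "sin (pi / real M2) \<le> sin (pi / real M1)"
    using le pos pi_gt_zero by (intro sin_monotone_2pi_le) linarith+
  moreover have "0 \<le> sin (pi / real M2)" using le pos \<open>pi / real M1 \<le> pi / 2\<close> pi_gt_zero
    by (intro sin_ge_zero) linarith+
  ultimately have "(sin (pi / real M2))\<^sup>2 \<le> (sin (pi / real M1))\<^sup>2" by (intro power_mono)
  then show ?thesis
    unfolding CM_def using sin_pi_div_sq_mul_less_1[OF assms(1) M1] assms(1)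
    by (intro CM_form_mono) auto
qed

lemma CM_mult_sq_tendsto: "(\<lambda>M::nat. CM B M * (real M)\<^sup>2) \<longlonglongrightarrow> pi\<^sup>2 * (B - 1)"
  unfolding CM_def by real_asymp

theorem proposition6:
  fixes n :: nat and phat ptil xilo xihi x :: "nat \<Rightarrow> real"
  assumes "n \<ge> 1"
    and "\<forall>j<n. ptil j \<ge> 0"
    and "\<forall>j<n. 0 \<le> xilo j \<and> xilo j \<le> xihi j"
    and "\<forall>j<n. x j \<ge> 0"
    and "PR n phat ptil xilo xihi x < \<infinity>"
  shows "(\<forall>M::nat. 0 < M \<longrightarrow> pi * sqrt (Bfun n phat ptil xilo xihi x) \<le> real M \<longrightarrow>
            PupM n phat ptil xilo x M
              \<le> (1 + CM (Bfun n phat ptil xilo xihi x) M) * PlowM n phat ptil xilo x M)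
       \<and> (\<forall>M1 M2::nat. 0 < M1 \<longrightarrow> pi * sqrt (Bfun n phat ptil xilo xihi x) \<le> real M1 \<longrightarrow>
            M1 \<le> M2 \<longrightarrow> CM (Bfun n phat ptil xilo xihi x) M2 \<le> CM (Bfun n phat ptil xilo xihi x) M1)
       \<and> ((\<lambda>M::nat. CM (Bfun n phat ptil xilo xihi x) M * (real M)\<^sup>2)
            \<longlonglongrightarrow> pi\<^sup>2 * (Bfun n phat ptil xilo xihi x - 1))"
proof -
  define B where "B = Bfun n phat ptil xilo xihi x"
  have B1: "1 \<le> B" unfolding B_def using Bfun_ge_1 assms(2-5) by blast
  have S: "0 \<le> oneRx n xilo x" unfolding oneRx_def using assms(3,4) by (intro sum_nonneg) auto
  have gap: "(wRx n (hvec phat ptil M m) xilo x)\<^sup>2 < (oneRx n xilo x)\<^sup>2 \<and>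
      (oneRx n xilo x)\<^sup>2 \<le> B * ((oneRx n xilo x)\<^sup>2 - (wRx n (hvec phat ptil M m) xilo x)\<^sup>2)" for M m
    unfolding B_def using wRx_hvec_bound[OF assms(2-5)] by blast
  show ?thesis
    unfolding B_def[symmetric]
    using PupM_le_CM_PlowM[OF B1 _ S gap] CM_antimono[OF B1] CM_mult_sq_tendsto by blast
qed

end
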